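(* Let $r\ge4$ be even. For any $n\ge r-1$ and $A>0$, there exists $f\in C^r[-1,1]$ with $f\le0$ on $[-1,0]$ and $f\ge0$ on $[0,1]$, such that every algebraic polynomial $P_n$ of degree $\le n$ with $P_n\le0$ on $[-1,0]$, $P_n\ge0$ on $[0,1]$ and $P_n^{(i)}(0)=f^{(i)}(0)$ for $0\le i\le r-1$ obeys $$\|f-P_n\|>A\,\|f^{(r)}\|.$$
   Context: $\|\cdot\|$ is the sup norm on $[-1,1]$. *)

theory Defs
  imports "HOL-Analysis.Analysis" "HOL-Computational_Algebra.Polynomial"
begin

definition sup_norm :: "(real \<Rightarrow> real) \<Rightarrow> real" where
  "sup_norm g = (SUP x\<in>{-1..1}. \<bar>g x\<bar>)"

text \<open>D is the family of derivatives D 0 = f, D 1 = f', ..., D r = f^(r) of a function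
  f in C^r[-1,1]: each D k (k \<le> r) is continuous on [-1,1], and D (k+1) is the derivative
  of D k on [-1,1] (one-sided at the endpoints).\<close>
definition Cr_derivs :: "nat \<Rightarrow> (nat \<Rightarrow> real \<Rightarrow> real) \<Rightarrow> bool" where
  "Cr_derivs r D \<longleftrightarrow>
     (\<forall>k\<le>r. continuous_on {-1..1} (D k)) \<and>
     (\<forall>k<r. \<forall>x\<in>{-1..1}. (D k has_real_derivative D (Suc k) x) (at x within {-1..1}))"

end

theory Submission
  imports Defs
begin

text \<open>
  The witness is \<open>f = T + g(x) - g(-x)\<close> for a small parameter \<open>s > 0\<close>. Here
  \<open>T(x) = s/2^r * (s^2 x^(r-3) - x^(r-1))\<close> is odd, nonnegative on \<open>[0, s]\<close> and negative
  beyond \<open>s\<close>, and \<open>g\<close> is a smoothed ramp vanishing left of \<open>s/4\<close> and dominating \<open>(x/2)^r\<close>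
  right of \<open>s\<close>. The ramp restores \<open>f \<ge> 0\<close> on \<open>[0, 1]\<close> while keeping \<open>|f^(r)| \<le> (r+1)!\<close> and
  \<open>|f| \<le> r + 3\<close> on \<open>[0, 1]\<close>, uniformly in \<open>s\<close>.

  An admissible \<open>P\<close> has Taylor jet \<open>T\<close> at 0. If \<open>\<parallel>f - P\<parallel> \<le> A \<parallel>f^(r)\<parallel>\<close>, then \<open>P\<close> is bounded
  on \<open>[1/2, 1]\<close> independently of \<open>s\<close>, and so, as \<open>deg P \<le> n\<close>, are its coefficients. Hence
  \<open>P(x) = T(x) + c x^r + O(x^(r+1))\<close> with an \<open>O\<close>-constant independent of \<open>s\<close>. As \<open>x^r\<close> is even,
  \<open>P(2s) \<ge> 0 \<ge> P(-2s)\<close> gives \<open>0 \<le> 2 T(2s) + O(s^(r+1))\<close>, whereas \<open>T(2s)\<close> is a negative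
  multiple of \<open>s^r\<close>: impossible for small \<open>s\<close>.
\<close>

lemma poly_higher_pderiv_0: "poly ((pderiv ^^ i) p) 0 = fact i * coeff p i"
  by (simp add: poly_0_coeff_0 coeff_higher_pderiv pochhammer_fact)

lemma abs_coeff_linear_factor_le:
  fixes q :: "real poly"
  assumes "\<And>j. \<bar>coeff q j\<bar> \<le> M"
  shows "\<bar>coeff ([:-t, 1:] * q) i\<bar> \<le> (1 + \<bar>t\<bar>) * M"
proof -
  have "coeff ([:-t, 1:] * q) i = - t * coeff q i + coeff (pCons 0 q) i"
    by simp
  moreover have "\<bar>t * coeff q i\<bar> \<le> \<bar>t\<bar> * M"
    unfolding abs_mult by (intro mult_left_mono assms) auto
  moreover have "\<bar>coeff (pCons 0 q) i\<bar> \<le> M"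
    using order_trans[OF abs_ge_zero assms[of 0]] assms by (cases i) auto
  ultimately show ?thesis
    by (simp add: algebra_simps abs_triangle_ineq4 abs_le_iff)
qed

lemma abs_poly_synthetic_div_le:
  fixes p :: "real poly"
  assumes "\<bar>poly p u\<bar> \<le> B" "\<bar>poly p t\<bar> \<le> B" "0 < g" "g \<le> \<bar>u - t\<bar>"
  shows "\<bar>poly (synthetic_div p t) u\<bar> \<le> 2 * B / g"
proof -
  have "poly p u = (u - t) * poly (synthetic_div p t) u + poly p t"
    using arg_cong[OF synthetic_div_correct'[of t p], of "\<lambda>q. poly q u"]
    by (simp add: algebra_simps)
  moreover have "u \<noteq> t"
    using assms by auto
  ultimately have "poly (synthetic_div p t) u = (poly p u - poly p t) / (u - t)"
    by (simp add: field_simps)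
  then have "\<bar>poly (synthetic_div p t) u\<bar> = \<bar>poly p u - poly p t\<bar> / \<bar>u - t\<bar>"
    by (simp add: abs_divide)
  also have "\<dots> \<le> 2 * B / g"
    using assms by (intro frac_le) (auto intro: order_trans[OF abs_triangle_ineq4])
  finally show ?thesis .
qed

lemma coeff_bound_by_values_finite:
  fixes S :: "real set"
  assumes "finite S"
  shows "\<exists>K\<ge>0. \<forall>p B. degree p < card S \<longrightarrow> (\<forall>t\<in>S. \<bar>poly p t\<bar> \<le> B) \<longrightarrow> (\<forall>i. \<bar>coeff p i\<bar> \<le> K * B)"
  using assms
proof (induction rule: finite_induct)
  case empty
  then show ?case by auto
next
  case (insert t S)
  obtain K where "0 \<le> K" and K:
    "\<And>p B i. degree p < card S \<Longrightarrow> \<forall>u\<in>S. \<bar>poly p u\<bar> \<le> B \<Longrightarrow> \<bar>coeff p i\<bar> \<le> K * B"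
    using insert.IH by blast
  define g where "g = Min (insert 1 ((\<lambda>u. \<bar>u - t\<bar>) ` S))"
  have "0 < g"
    using insert by (auto simp: g_def Min_gr_iff)
  have g_le: "g \<le> \<bar>u - t\<bar>" if "u \<in> S" for u
    using insert that by (auto simp: g_def)
  show ?case
  proof (intro exI[of _ "1 + (1 + \<bar>t\<bar>) * K * 2 / g"] conjI allI impI)
    show "0 \<le> 1 + (1 + \<bar>t\<bar>) * K * 2 / g"
      using \<open>0 \<le> K\<close> \<open>0 < g\<close> by simp
    fix p B i
    assume deg: "degree p < card (insert t S)" and bound: "\<forall>u\<in>insert t S. \<bar>poly p u\<bar> \<le> B"
    define c q where "c = poly p t" and "q = synthetic_div p t"
    have c: "\<bar>c\<bar> \<le> B"
      using bound by (simp add: c_def)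
    have coeff_q: "\<bar>coeff q j\<bar> \<le> K * (2 * B / g)" for j
    proof (cases "q = 0")
      case True
      then show ?thesis
        using c \<open>0 \<le> K\<close> \<open>0 < g\<close> by simp
    next
      case False
      then have "degree q < card S"
        using deg insert by (auto simp: q_def degree_synthetic_div synthetic_div_eq_0_iff)
      moreover have "\<forall>u\<in>S. \<bar>poly q u\<bar> \<le> 2 * B / g"
        using bound c \<open>0 < g\<close> g_le unfolding c_def q_def
        by (auto intro: abs_poly_synthetic_div_le)
      ultimately show ?thesis
        using K by blast
    qed
    have "\<bar>coeff ([:-t, 1:] * q) i\<bar> \<le> (1 + \<bar>t\<bar>) * (K * (2 * B / g))"
      by (rule abs_coeff_linear_factor_le[OF coeff_q])
    moreover have "\<bar>coeff [:c:] i\<bar> \<le> B"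
      using c order_trans[OF abs_ge_zero c] by (cases i) auto
    moreover have "p = [:-t, 1:] * q + [:c:]"
      unfolding c_def q_def by (rule synthetic_div_correct'[symmetric])
    ultimately have "\<bar>coeff p i\<bar> \<le> (1 + \<bar>t\<bar>) * (K * (2 * B / g)) + B"
      by (auto simp: abs_le_iff)
    then show "\<bar>coeff p i\<bar> \<le> (1 + (1 + \<bar>t\<bar>) * K * 2 / g) * B"
      by (simp add: algebra_simps)
  qed
qed

lemma coeff_bound_by_values:
  fixes S :: "real set"
  assumes "infinite S"
  shows "\<exists>K\<ge>0. \<forall>p B. degree p \<le> n \<longrightarrow> (\<forall>t\<in>S. \<bar>poly p t\<bar> \<le> B) \<longrightarrow> (\<forall>i. \<bar>coeff p i\<bar> \<le> K * B)"
proof -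
  obtain T where "T \<subseteq> S" "finite T" "card T = Suc n"
    using infinite_arbitrarily_large[OF assms] by blast
  with coeff_bound_by_values_finite[of T] show ?thesis
    by (fastforce simp: less_Suc_eq_le)
qed

lemma abs_poly_le_by_coeffs:
  fixes p :: "real poly"
  assumes "degree p \<le> n" "\<And>i. i < m \<Longrightarrow> coeff p i = 0" "\<And>i. \<bar>coeff p i\<bar> \<le> L" "\<bar>x\<bar> \<le> 1"
  shows "\<bar>poly p x\<bar> \<le> (real n + 1) * L * \<bar>x\<bar> ^ m"
proof -
  have "poly p x = (\<Sum>i\<le>n. coeff p i * x ^ i)"
    using arg_cong[OF poly_as_sum_of_monoms'[OF assms(1)], of "\<lambda>p. poly p x"]
    by (simp add: poly_sum poly_monom)
  also have "\<bar>\<dots>\<bar> \<le> (\<Sum>i\<le>n. L * \<bar>x\<bar> ^ m)"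
  proof (rule order_trans[OF sum_abs sum_mono])
    fix i
    show "\<bar>coeff p i * x ^ i\<bar> \<le> L * \<bar>x\<bar> ^ m"
    proof (cases "i < m")
      case True
      then show ?thesis
        using assms(2,3)[of i] by simp
    next
      case False
      then have "\<bar>x\<bar> ^ i \<le> \<bar>x\<bar> ^ m"
        using assms(4) by (intro power_decreasing) auto
      then show ?thesis
        unfolding abs_mult power_abs using assms(3)[of i] by (intro mult_mono) auto
    qed
  qed
  also have "\<dots> = (real n + 1) * L * \<bar>x\<bar> ^ m"
    by simp
  finally show ?thesis .
qed

lemma abs_le_sup_norm:
  assumes "continuous_on {-1..1} g" "x \<in> {-1..1}"
  shows "\<bar>g x\<bar> \<le> sup_norm g"
proof -
  have "compact ((\<lambda>x. \<bar>g x\<bar>) ` {-1..1})"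
    using assms by (intro compact_continuous_image continuous_intros) auto
  then have "bdd_above ((\<lambda>x. \<bar>g x\<bar>) ` {-1..1})"
    by (intro bounded_imp_bdd_above compact_imp_bounded)
  then show ?thesis
    unfolding sup_norm_def using assms by (intro cSUP_upper) auto
qed

lemma sup_norm_le: "(\<And>x. x \<in> {-1..1} \<Longrightarrow> \<bar>g x\<bar> \<le> c) \<Longrightarrow> sup_norm g \<le> c"
  unfolding sup_norm_def by (intro cSUP_least) auto

definition trunc_pow :: "nat \<Rightarrow> real \<Rightarrow> real \<Rightarrow> real" where
  "trunc_pow m a x = (max (x - a) 0) ^ m"

lemma continuous_on_trunc_pow [continuous_intros]:
  "continuous_on S f \<Longrightarrow> continuous_on S (\<lambda>x. trunc_pow m a (f x))"
  unfolding trunc_pow_def by (intro continuous_intros)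

lemma trunc_pow_eq_0: "x \<le> a \<Longrightarrow> m \<noteq> 0 \<Longrightarrow> trunc_pow m a x = 0"
  by (simp add: trunc_pow_def)

lemma trunc_pow_antimono: "a \<le> b \<Longrightarrow> trunc_pow m b x \<le> trunc_pow m a x"
  unfolding trunc_pow_def by (intro power_mono) auto

lemma has_real_derivative_trunc_pow:
  assumes "m \<noteq> 0"
  shows "(trunc_pow (Suc m) a has_real_derivative Suc m * trunc_pow m a x) (at x)"
proof (cases x a rule: linorder_cases)
  case less
  have "\<forall>\<^sub>F y in nhds x. trunc_pow (Suc m) a y = 0"
    using eventually_nhds_in_open[of "{..<a}" x] less
    by (auto simp: trunc_pow_def elim!: eventually_mono)
  then show ?thesis
    using less assms by (subst DERIV_cong_ev[OF refl _ refl]) (auto simp: trunc_pow_eq_0)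
next
  case greater
  have "\<forall>\<^sub>F y in nhds x. trunc_pow (Suc m) a y = (y - a) ^ Suc m"
    using eventually_nhds_in_open[of "{a<..}" x] greater
    by (auto simp: trunc_pow_def elim!: eventually_mono)
  moreover have "((\<lambda>y. (y - a) ^ Suc m) has_real_derivative Suc m * (x - a) ^ m) (at x)"
    by (rule derivative_eq_intros refl)+ simp
  ultimately show ?thesis
    using greater by (subst DERIV_cong_ev[OF refl _ refl]) (auto simp: trunc_pow_def)
next
  case equal
  \<comment> \<open>At the kink the difference quotient is dominated by \<open>\<bar>y - a\<bar> ^ m\<close>,
    which tends to 0 as \<open>m \<noteq> 0\<close>.\<close>
  have "((\<lambda>y. \<bar>y - a\<bar> ^ m) \<longlongrightarrow> \<bar>a - a\<bar> ^ m) (at a)"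
    by (intro tendsto_intros)
  then have lim: "((\<lambda>y. \<bar>y - a\<bar> ^ m) \<longlongrightarrow> 0) (at a)"
    using assms by (simp add: zero_power)
  have "((\<lambda>y. (trunc_pow (Suc m) a y - trunc_pow (Suc m) a a) / (y - a)) \<longlongrightarrow> 0) (at a)"
  proof (rule Lim_null_comparison[OF always_eventually lim], intro allI)
    fix y :: real
    have "\<bar>max (y - a) 0\<bar> ^ Suc m \<le> \<bar>y - a\<bar> ^ Suc m"
      by (intro power_mono) auto
    then show "norm ((trunc_pow (Suc m) a y - trunc_pow (Suc m) a a) / (y - a)) \<le> \<bar>y - a\<bar> ^ m"
      by (cases "y = a") (auto simp: trunc_pow_def divide_simps power_abs abs_mult mult.commute)
  qed
  then show ?thesis
    using equal assms by (simp add: has_field_derivative_iff trunc_pow_eq_0)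
qed

text \<open>\<open>ramp r \<sigma> k\<close> is the \<open>k\<close>-th derivative of \<open>((x - \<sigma>)\<^sub>+^(r+1) - (x - 2\<sigma>)\<^sub>+^(r+1)) / \<sigma>\<close>.\<close>

definition ramp :: "nat \<Rightarrow> real \<Rightarrow> nat \<Rightarrow> real \<Rightarrow> real" where
  "ramp r \<sigma> k x =
     fact (r + 1) / fact (r + 1 - k) *
       (trunc_pow (r + 1 - k) \<sigma> x - trunc_pow (r + 1 - k) (2 * \<sigma>) x) / \<sigma>"

lemma continuous_on_ramp [continuous_intros]:
  "continuous_on S f \<Longrightarrow> continuous_on S (\<lambda>x. ramp r \<sigma> k (f x))"
  unfolding ramp_def divide_inverse by (intro continuous_intros)

lemma has_real_derivative_ramp:
  assumes "k < r"
  shows "(ramp r \<sigma> k has_real_derivative ramp r \<sigma> (Suc k) x) (at x)"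
proof -
  obtain m where m: "r + 1 - k = Suc m" "r + 1 - Suc k = m" "m \<noteq> 0"
    using assms by (intro that[of "r - k"]) auto
  have "((\<lambda>x. fact (r + 1) / fact (Suc m) *
            (trunc_pow (Suc m) \<sigma> x - trunc_pow (Suc m) (2 * \<sigma>) x) / \<sigma>)
     has_real_derivative fact (r + 1) / fact (Suc m) *
       (Suc m * trunc_pow m \<sigma> x - Suc m * trunc_pow m (2 * \<sigma>) x) / \<sigma>) (at x)"
    by (intro DERIV_cdivide DERIV_cmult DERIV_diff has_real_derivative_trunc_pow m)
  then show ?thesis
    unfolding ramp_def m
    by (rule DERIV_cong) (cases "\<sigma> = 0", simp_all add: fact_Suc field_simps del: of_nat_Suc)
qed

lemma ramp_0: "ramp r \<sigma> 0 x = (trunc_pow (Suc r) \<sigma> x - trunc_pow (Suc r) (2 * \<sigma>) x) / \<sigma>"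
  by (simp add: ramp_def)

lemma ramp_eq_0: "0 < \<sigma> \<Longrightarrow> x \<le> \<sigma> \<Longrightarrow> k \<le> r \<Longrightarrow> ramp r \<sigma> k x = 0"
  by (simp add: ramp_def trunc_pow_eq_0)

lemma ramp_nonneg: "0 < \<sigma> \<Longrightarrow> 0 \<le> ramp r \<sigma> k x"
  unfolding ramp_def
  by (intro divide_nonneg_pos mult_nonneg_nonneg) (auto intro: trunc_pow_antimono)

lemma ramp_top_le: "0 < \<sigma> \<Longrightarrow> ramp r \<sigma> r x \<le> fact (r + 1)"
  by (auto simp: ramp_def trunc_pow_def max_def divide_simps)

lemma ramp_ge:
  assumes "0 < \<sigma>" "4 * \<sigma> \<le> x"
  shows "(x / 2) ^ r \<le> ramp r \<sigma> 0 x"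
proof -
  define b where "b = x - 2 * \<sigma>"
  have b: "x / 2 \<le> b" "0 \<le> b"
    using assms by (auto simp: b_def)
  have "(x / 2) ^ r \<le> b ^ r"
    using assms b by (intro power_mono) auto
  also have "\<dots> \<le> ((b + \<sigma>) ^ Suc r - b ^ Suc r) / \<sigma>"
  proof -
    have "b ^ r \<le> (b + \<sigma>) ^ r"
      using assms b by (intro power_mono) auto
    then have "\<sigma> * b ^ r + b * b ^ r \<le> \<sigma> * (b + \<sigma>) ^ r + b * (b + \<sigma>) ^ r"
      using assms b by (intro add_mono mult_left_mono) auto
    then show ?thesis
      using assms by (simp add: divide_simps algebra_simps)
  qed
  also have "\<dots> = ramp r \<sigma> 0 x"
    using assms b by (simp add: ramp_0 trunc_pow_def b_def algebra_simps)
  finally show ?thesis .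
qed

lemma ramp_le:
  assumes "0 < \<sigma>" "x \<le> 1"
  shows "ramp r \<sigma> 0 x \<le> r + 1"
proof -
  define a b where "a = max (x - \<sigma>) 0" and "b = max (x - 2 * \<sigma>) 0"
  have ab: "\<bar>a\<bar> \<le> 1" "\<bar>b\<bar> \<le> 1" "\<bar>a - b\<bar> \<le> \<sigma>"
    using assms by (auto simp: a_def b_def)
  have "a ^ (r + 1) - b ^ (r + 1) \<le> (r + 1) * \<bar>a - b\<bar>"
    using norm_power_diff[of a b "r + 1"] ab by simp
  also have "\<dots> \<le> (r + 1) * \<sigma>"
    using ab by (intro mult_left_mono) auto
  finally show ?thesis
    using assms by (simp add: ramp_0 trunc_pow_def a_def[symmetric] b_def[symmetric] divide_simps)
qed

definition jet_poly :: "nat \<Rightarrow> real \<Rightarrow> real poly" where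
  "jet_poly r s = monom (s ^ 3 / 2 ^ r) (r - 3) - monom (s / 2 ^ r) (r - 1)"

lemma poly_jet_poly:
  "poly (jet_poly r s) x = s ^ 3 / 2 ^ r * x ^ (r - 3) - s / 2 ^ r * x ^ (r - 1)"
  by (simp add: jet_poly_def poly_monom)

lemma poly_jet_poly_minus: "even r \<Longrightarrow> 4 \<le> r \<Longrightarrow> poly (jet_poly r s) (- x) = - poly (jet_poly r s) x"
  by (simp add: poly_jet_poly power_minus_odd)

lemma coeff_jet_poly_eq_0: "0 < r \<Longrightarrow> r \<le> i \<Longrightarrow> coeff (jet_poly r s) i = 0"
  by (auto simp: jet_poly_def coeff_monom)

lemma higher_pderiv_jet_poly: "0 < r \<Longrightarrow> (pderiv ^^ r) (jet_poly r s) = 0"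
  by (rule poly_eqI) (simp add: coeff_higher_pderiv coeff_jet_poly_eq_0)

lemma power_split_at_minus_3:
  fixes x :: real
  assumes "3 \<le> r"
  shows "x ^ (r - 1) = x ^ (r - 3) * x ^ 2" and "x ^ (r + 1) = x ^ (r - 3) * x ^ 4"
proof -
  have "r - 1 = (r - 3) + 2" "r + 1 = (r - 3) + 4"
    using assms by simp_all
  then show "x ^ (r - 1) = x ^ (r - 3) * x ^ 2" and "x ^ (r + 1) = x ^ (r - 3) * x ^ 4"
    by (metis power_add)+
qed

lemma poly_jet_poly_nonneg:
  assumes "3 \<le> r" "0 \<le> x" "x \<le> s"
  shows "0 \<le> poly (jet_poly r s) x"
proof -
  have "x ^ 2 \<le> s ^ 2"
    using assms by (intro power_mono) auto
  moreover have "poly (jet_poly r s) x = s / 2 ^ r * x ^ (r - 3) * (s ^ 2 - x ^ 2)"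
    unfolding poly_jet_poly power_split_at_minus_3[OF assms(1)]
    by (simp add: power3_eq_cube power2_eq_square field_simps)
  ultimately show ?thesis
    using assms by simp
qed

lemma poly_jet_poly_double:
  assumes "3 \<le> r"
  shows "poly (jet_poly r s) (2 * s) = - 3 * s ^ 3 * (2 * s) ^ (r - 3) / 2 ^ r"
  unfolding poly_jet_poly power_split_at_minus_3[OF assms]
  by (simp add: power3_eq_cube power2_eq_square field_simps)

lemma abs_poly_jet_poly_le:
  assumes "0 \<le> s" "s \<le> 1" "0 \<le> x" "x \<le> 1"
  shows "\<bar>poly (jet_poly r s) x\<bar> \<le> 2"
proof -
  have s: "s ^ 3 \<le> 2 ^ r" "s \<le> 2 ^ r"
    using assms by (auto intro: order_trans[OF _ one_le_power] simp: power_le_one)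
  have "s ^ 3 / 2 ^ r * x ^ (r - 3) \<le> 1" "s / 2 ^ r * x ^ (r - 1) \<le> 1"
    by (rule mult_le_one; use assms s in \<open>simp add: power_le_one\<close>)+
  moreover have "0 \<le> s ^ 3 / 2 ^ r * x ^ (r - 3)" "0 \<le> s / 2 ^ r * x ^ (r - 1)"
    using assms by simp_all
  ultimately show ?thesis
    unfolding poly_jet_poly by linarith
qed

text \<open>\<open>witness r s k\<close> is the \<open>k\<close>-th derivative of \<open>f = jet_poly r s + g(x) - g(-x)\<close> with
  \<open>g = ramp r (s/4) 0\<close>.\<close>

definition witness :: "nat \<Rightarrow> real \<Rightarrow> nat \<Rightarrow> real \<Rightarrow> real" where
  "witness r s k x =
     poly ((pderiv ^^ k) (jet_poly r s)) x +
       (ramp r (s / 4) k x - (-1) ^ k * ramp r (s / 4) k (- x))"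

lemma Cr_derivs_witness: "Cr_derivs r (witness r s)"
  unfolding Cr_derivs_def
proof (intro conjI allI impI ballI)
  fix k
  show "continuous_on {-1..1} (witness r s k)"
    unfolding witness_def by (intro continuous_intros)
next
  fix k x
  assume "k < r"
  have "(witness r s k has_real_derivative witness r s (Suc k) x) (at x)"
    unfolding witness_def
    by (rule derivative_eq_intros has_real_derivative_ramp[OF \<open>k < r\<close>]
        DERIV_mirror[THEN iffD1, OF has_real_derivative_ramp[OF \<open>k < r\<close>]] refl)+ simp
  then show "(witness r s k has_real_derivative witness r s (Suc k) x) (at x within {-1..1})"
    by (rule has_field_derivative_at_within)
qed

lemma witness_minus: "even r \<Longrightarrow> 4 \<le> r \<Longrightarrow> witness r s 0 (- x) = - witness r s 0 x"
  by (simp add: witness_def poly_jet_poly_minus)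

lemma witness_at_0: "i < r \<Longrightarrow> 0 < s \<Longrightarrow> witness r s i 0 = fact i * coeff (jet_poly r s) i"
  by (simp add: witness_def ramp_eq_0 poly_higher_pderiv_0)

lemma witness_pos_side:
  assumes "0 < s" "0 \<le> x"
  shows "witness r s 0 x = poly (jet_poly r s) x + ramp r (s / 4) 0 x"
  using assms by (simp add: witness_def ramp_eq_0)

lemma witness_nonneg:
  assumes "4 \<le> r" "0 < s" "0 \<le> x"
  shows "0 \<le> witness r s 0 x"
proof (cases "x \<le> s")
  case True
  then show ?thesis
    using assms poly_jet_poly_nonneg[of r x s] ramp_nonneg[of "s / 4"]
    by (simp add: witness_pos_side)
next
  case False
  \<comment> \<open>Beyond \<open>s\<close> the ramp, of size at least \<open>(x / 2) ^ r\<close>, outweighs the negative part of the jet.\<close>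
  have "s / 2 ^ r * x ^ (r - 1) \<le> x / 2 ^ r * x ^ (r - 1)"
    using False assms by (intro mult_right_mono divide_right_mono) auto
  also have "\<dots> = (x / 2) ^ r"
    using power_minus_mult[of r x] assms by (simp add: power_divide mult.commute)
  also have "\<dots> \<le> ramp r (s / 4) 0 x"
    using False assms by (intro ramp_ge) auto
  moreover have "0 \<le> s ^ 3 / 2 ^ r * x ^ (r - 3)"
    using assms by simp
  ultimately show ?thesis
    unfolding witness_pos_side[OF assms(2,3)] poly_jet_poly by linarith
qed

lemma abs_witness_le:
  assumes "0 < s" "s \<le> 1" "0 \<le> x" "x \<le> 1"
  shows "\<bar>witness r s 0 x\<bar> \<le> real r + 3"
  using abs_poly_jet_poly_le[of s x r] ramp_le[of "s / 4" x r] ramp_nonneg[of "s / 4" r 0 x] assms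
  by (simp add: witness_pos_side)

lemma abs_witness_top_le:
  assumes "even r" "0 < r" "0 < s"
  shows "\<bar>witness r s r x\<bar> \<le> fact (r + 1)"
  using ramp_top_le[of "s / 4" r x] ramp_top_le[of "s / 4" r "- x"]
    ramp_nonneg[of "s / 4" r r x] ramp_nonneg[of "s / 4" r r "- x"] assms
  by (simp add: witness_def higher_pderiv_jet_poly abs_le_iff)

lemma sign_compatible_jet_extension_bound:
  fixes p :: "real poly"
  assumes r: "even r" "4 \<le> r" and s: "0 < s" "2 * s \<le> 1"
    and "degree p \<le> n" "0 \<le> poly p (2 * s)" "poly p (- (2 * s)) \<le> 0"
    and jet: "\<And>i. i < r \<Longrightarrow> coeff p i = coeff (jet_poly r s) i"
    and coeff_le: "\<And>i. \<bar>coeff p i\<bar> \<le> L"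
  shows "3 \<le> 2 ^ (r + 4) * (real n + 1) * L * s"
proof -
  have r3: "3 \<le> r"
    using r by simp
  define q where "q = p - jet_poly r s - monom (coeff p r) r"
  have coeff_q: "coeff q i = (if i \<le> r then 0 else coeff p i)" for i
    using jet[of i] coeff_jet_poly_eq_0[of r i s] r by (auto simp: q_def coeff_monom)
  have "degree q \<le> n"
    using \<open>degree p \<le> n\<close> by (intro degree_le) (auto simp: coeff_q coeff_eq_0)
  moreover have "\<bar>coeff q i\<bar> \<le> L" for i
    using coeff_le[of i] order_trans[OF abs_ge_zero coeff_le[of 0]] by (simp add: coeff_q)
  ultimately have q_le_pow: "\<bar>poly q y\<bar> \<le> (real n + 1) * L * \<bar>y\<bar> ^ (r + 1)" if "\<bar>y\<bar> \<le> 1" for y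
    using that by (intro abs_poly_le_by_coeffs) (auto simp: coeff_q)
  have q_le: "\<bar>poly q y\<bar> \<le> (real n + 1) * L * (2 * s) ^ (r + 1)" if "\<bar>y\<bar> = 2 * s" for y
    using q_le_pow[of y] that s by simp
  have "poly p y = poly (jet_poly r s) y + coeff p r * y ^ r + poly q y" for y
    by (simp add: q_def poly_monom)
  \<comment> \<open>The even monomial \<open>y ^ r\<close> cancels, and the jet is odd.\<close>
  then have "poly p (2 * s) - poly p (- (2 * s)) =
      2 * poly (jet_poly r s) (2 * s) + poly q (2 * s) - poly q (- (2 * s))"
    using r by (simp add: poly_jet_poly_minus)
  also have "\<dots> \<le> 2 * poly (jet_poly r s) (2 * s) + 2 * ((real n + 1) * L * (2 * s) ^ (r + 1))"
    using q_le[of "2 * s"] q_le[of "- (2 * s)"] s by (simp add: abs_le_iff)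
  also have "\<dots> = (2 * s) ^ (r - 3) * s ^ 3 * (32 * (real n + 1) * L * s - 6 / 2 ^ r)"
    unfolding poly_jet_poly_double[OF r3] power_split_at_minus_3(2)[OF r3]
    by (simp add: power4_eq_xxxx power3_eq_cube field_simps)
  finally have "0 \<le> (2 * s) ^ (r - 3) * s ^ 3 * (32 * (real n + 1) * L * s - 6 / 2 ^ r)"
    using assms by linarith
  moreover have "0 < (2 * s) ^ (r - 3) * s ^ 3"
    using s by simp
  ultimately have "0 \<le> 32 * (real n + 1) * L * s - 6 / 2 ^ r"
    by (metis mult_le_cancel_left_pos mult_zero_right)
  then have "6 \<le> 2 ^ r * (32 * (real n + 1) * L * s)"
    by (simp add: field_simps)
  then show ?thesis
    by (simp add: power_add algebra_simps)
qed

lemma abs_poly_le_near_witness: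
  assumes "0 < s" "s \<le> 1" "sup_norm (\<lambda>x. witness r s 0 x - poly p x) \<le> C" "0 \<le> t" "t \<le> 1"
  shows "\<bar>poly p t\<bar> \<le> real r + 3 + C"
proof -
  have "continuous_on {-1..1} (\<lambda>x. witness r s 0 x - poly p x)"
    unfolding witness_def by (intro continuous_intros)
  then have "\<bar>witness r s 0 t - poly p t\<bar> \<le> C"
    using abs_le_sup_norm[of _ t] assms by force
  then show ?thesis
    using abs_witness_le[OF assms(1,2,4,5), of r] by linarith
qed

lemma witness_approximation_error_gt:
  fixes P :: "real poly"
  assumes r: "even r" "4 \<le> r" and s: "0 < s" "2 * s \<le> 1" and "0 < A"
    and K: "\<And>p B. degree p \<le> n \<Longrightarrow> \<forall>t\<in>{1/2..1::real}. \<bar>poly p t\<bar> \<le> B \<Longrightarrow> \<forall>i. \<bar>coeff p i\<bar> \<le> K * B"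
    and small: "2 ^ (r + 4) * (real n + 1) * (K * (real r + 3 + A * fact (r + 1))) * s < 1"
    and P: "degree P \<le> n" "\<forall>x\<in>{-1..0}. poly P x \<le> 0" "\<forall>x\<in>{0..1}. poly P x \<ge> 0"
    and jet: "\<forall>i<r. poly ((pderiv ^^ i) P) 0 = witness r s i 0"
  shows "A * sup_norm (witness r s r) < sup_norm (\<lambda>x. witness r s 0 x - poly P x)"
proof (rule ccontr)
  define L where "L = K * (real r + 3 + A * fact (r + 1))"
  assume "\<not> ?thesis"
  moreover have "A * sup_norm (witness r s r) \<le> A * fact (r + 1)"
    using assms by (intro mult_left_mono sup_norm_le abs_witness_top_le) auto
  ultimately have "sup_norm (\<lambda>x. witness r s 0 x - poly P x) \<le> A * fact (r + 1)"
    by linarith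
  then have "\<bar>coeff P i\<bar> \<le> L" for i
    using K[of P] abs_poly_le_near_witness[of s r P] s P by (simp add: L_def)
  moreover have "coeff P i = coeff (jet_poly r s) i" if "i < r" for i
    using jet that s by (simp add: poly_higher_pderiv_0 witness_at_0)
  ultimately have "3 \<le> 2 ^ (r + 4) * (real n + 1) * L * s"
    using P r s by (intro sign_compatible_jet_extension_bound[where p = P]) auto
  with small show False
    unfolding L_def by linarith
qed

theorem lemma3p14:
  fixes r n :: nat and A :: real
  assumes "even r" "r \<ge> 4" "n \<ge> r - 1" "A > 0"
  shows "\<exists>f D. Cr_derivs r D \<and> D 0 = f \<and>
           (\<forall>x\<in>{-1..0}. f x \<le> 0) \<and> (\<forall>x\<in>{0..1}. f x \<ge> 0) \<and>
           (\<forall>P :: real poly. degree P \<le> n \<and>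
               (\<forall>x\<in>{-1..0}. poly P x \<le> 0) \<and> (\<forall>x\<in>{0..1}. poly P x \<ge> 0) \<and>
               (\<forall>i<r. poly ((pderiv ^^ i) P) 0 = D i 0)
             \<longrightarrow> sup_norm (\<lambda>x. f x - poly P x) > A * sup_norm (D r))"
proof -
  obtain K where "0 \<le> K" and K:
    "\<And>p B. degree p \<le> n \<Longrightarrow> \<forall>t\<in>{1/2..1::real}. \<bar>poly p t\<bar> \<le> B \<Longrightarrow> \<forall>i. \<bar>coeff p i\<bar> \<le> K * B"
    using coeff_bound_by_values[of "{1/2..1::real}" n] by auto
  define C where "C = 2 ^ (r + 4) * (real n + 1) * (K * (real r + 3 + A * fact (r + 1)))"
  define s where "s = 1 / (2 * (C + 1))"
  have "0 \<le> C"
    using \<open>0 \<le> K\<close> \<open>A > 0\<close> by (simp add: C_def)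
  then have s: "0 < s" "2 * s \<le> 1" and small: "C * s < 1"
    by (simp_all add: s_def field_simps)
  have "witness r s 0 x \<le> 0" if "x \<in> {-1..0}" for x
    using witness_nonneg[of r s "- x"] witness_minus[of r s "- x"] that s assms by simp
  then show ?thesis
    using Cr_derivs_witness witness_nonneg s assms
      witness_approximation_error_gt[OF assms(1,2) s \<open>A > 0\<close> K small[unfolded C_def]]
    by (intro exI[of _ "witness r s 0"] exI[of _ "witness r s"]) auto
qed

end
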